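(* Let $k$ be a commutative ring containing $1/2$, let $R$ be a smooth commutative $k$-algebra such that $\mathrm{Der}_k(R)$ is free with a basis $\tau_1,\dots,\tau_n$ of pairwise commuting derivations, and let $g=(g^{ij})\in GL_n(R)$ be such that the derivations $\tau'_i=g^{ij}\tau_j$ pairwise commute. Let $A=(g^{-1})^{t}$, i.e. $A^{\alpha\beta}=(g^{-1})^{\beta\alpha}$ (the matrix expressing the basis of $1$-forms dual to $(\tau'_i)$ in terms of the basis dual to $(\tau_i)$). With summation over repeated indices define $$h_\Omega^{ij}=\tau_p\tau_j(g^{ip})+\tfrac12\,\tau_q(g^{ip})\,\tau_p(g^{rq})\,(g^{-1})^{jr},$$ $$g^{i\alpha\gamma}=g^{iq}\tau_q\big((A^{-1})^{\alpha\mu}\big)A^{\mu\gamma},\qquad h_E^{ij}=\tau_j(g^{i\nu\nu})+\tfrac12\,g^{iq}\tau_j\big((A^{-1})^{\mu\beta}\big)A^{\beta\gamma}\tau_q\big((A^{-1})^{\gamma\nu}\big)A^{\nu\mu}.$$ Then $h^{ij}:=h_\Omega^{ij}-h_E^{ij}=0$ for all $i,j$.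
   Context: $(g^{-1})^{jr}$ is the $(j,r)$ entry of $g^{-1}$. Repeated indices are summed. *)

theory Defs
  imports "HOL-Analysis.Analysis"
begin

text \<open>Structure map of a k-algebra: a unital ring homomorphism phi from k to R.\<close>
definition ring_hom_map :: "('k::comm_ring_1 \<Rightarrow> 'r::comm_ring_1) \<Rightarrow> bool" where
  "ring_hom_map phi \<longleftrightarrow> phi 1 = 1 \<and> (\<forall>a b. phi (a + b) = phi a + phi b)
     \<and> (\<forall>a b. phi (a * b) = phi a * phi b)"

definition is_k_derivation :: "('k::comm_ring_1 \<Rightarrow> 'r::comm_ring_1) \<Rightarrow> ('r \<Rightarrow> 'r) \<Rightarrow> bool" where
  "is_k_derivation phi D \<longleftrightarrow>
     (\<forall>x y. D (x + y) = D x + D y) \<and>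
     (\<forall>c x. D (phi c * x) = phi c * D x) \<and>
     (\<forall>x y. D (x * y) = x * D y + y * D x)"

definition is_der_basis :: "('k::comm_ring_1 \<Rightarrow> 'r::comm_ring_1) \<Rightarrow> ('n::finite \<Rightarrow> 'r \<Rightarrow> 'r) \<Rightarrow> bool" where
  "is_der_basis phi tau \<longleftrightarrow>
     (\<forall>i. is_k_derivation phi (tau i)) \<and>
     (\<forall>D. is_k_derivation phi D \<longrightarrow> (\<exists>!c::'n \<Rightarrow> 'r. D = (\<lambda>x. \<Sum>j\<in>UNIV. c j * tau j x)))"

definition pairwise_commuting :: "('n \<Rightarrow> 'r \<Rightarrow> 'r) \<Rightarrow> bool" where
  "pairwise_commuting tau \<longleftrightarrow> (\<forall>i j. tau i \<circ> tau j = tau j \<circ> tau i)"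

definition new_ders :: "'r::comm_ring_1^'n::finite^'n \<Rightarrow> ('n \<Rightarrow> 'r \<Rightarrow> 'r) \<Rightarrow> 'n \<Rightarrow> 'r \<Rightarrow> 'r" where
  "new_ders g tau i = (\<lambda>x. \<Sum>j\<in>UNIV. g$i$j * tau j x)"

definition Amat :: "'r::comm_ring_1^'n::finite^'n \<Rightarrow> 'r^'n^'n" where
  "Amat g = transpose (matrix_inv g)"

definition h_Omega :: "('n::finite \<Rightarrow> 'r::comm_ring_1 \<Rightarrow> 'r) \<Rightarrow> 'r^'n^'n \<Rightarrow> 'r \<Rightarrow> 'n \<Rightarrow> 'n \<Rightarrow> 'r" where
  "h_Omega tau g half i j =
     (\<Sum>p\<in>UNIV. tau p (tau j (g$i$p))) +
     half * (\<Sum>q\<in>UNIV. \<Sum>p\<in>UNIV. \<Sum>r\<in>UNIV. tau q (g$i$p) * tau p (g$r$q) * (matrix_inv g)$j$r)"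

definition g3 :: "('n::finite \<Rightarrow> 'r::comm_ring_1 \<Rightarrow> 'r) \<Rightarrow> 'r^'n^'n \<Rightarrow> 'n \<Rightarrow> 'n \<Rightarrow> 'n \<Rightarrow> 'r" where
  "g3 tau g i \<alpha> \<gamma> =
     (\<Sum>q\<in>UNIV. \<Sum>\<mu>\<in>UNIV. g$i$q * tau q ((matrix_inv (Amat g))$\<alpha>$\<mu>) * (Amat g)$\<mu>$\<gamma>)"

definition h_E :: "('n::finite \<Rightarrow> 'r::comm_ring_1 \<Rightarrow> 'r) \<Rightarrow> 'r^'n^'n \<Rightarrow> 'r \<Rightarrow> 'n \<Rightarrow> 'n \<Rightarrow> 'r" where
  "h_E tau g half i j =
     (\<Sum>\<nu>\<in>UNIV. tau j (g3 tau g i \<nu> \<nu>)) +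
     half * (\<Sum>q\<in>UNIV. \<Sum>\<mu>\<in>UNIV. \<Sum>\<beta>\<in>UNIV. \<Sum>\<gamma>\<in>UNIV. \<Sum>\<nu>\<in>UNIV.
        g$i$q * tau j ((matrix_inv (Amat g))$\<mu>$\<beta>) * (Amat g)$\<beta>$\<gamma>
          * tau q ((matrix_inv (Amat g))$\<gamma>$\<nu>) * (Amat g)$\<nu>$\<mu>)"

end

theory Submission
  imports Defs
begin

text \<open>Because the tau_q commute, the commutator of tau'_a = g^{aq} tau_q and tau'_b is the
  derivation (tau'_a(g^{bj}) - tau'_b(g^{aj})) tau_j, so, the tau_j being a basis, commutation of the
  tau' means that tau'_a(g^{bj}) is symmetric in a and b. Inverting, tau_p = (g^-1)^{pa} tau'_a, this
  symmetry turns g^{i alpha gamma} into tau_gamma(g^{i alpha}) (recall A^-1 = g^t) and makes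
  (g^-1)^{jr} tau_p(g^{rq}) symmetric in j and p. Hence the second-order terms of h_Omega and h_E
  both equal tau_p tau_j(g^{ip}), and both quadratic terms equal tau_q(g^{ip}) (g^-1)^{pr} tau_j(g^{rq}).\<close>

lemma additive_sum:
  fixes D :: "'a::ab_group_add \<Rightarrow> 'b::ab_group_add"
  assumes add: "\<And>x y. D (x + y) = D x + D y"
  shows "D (\<Sum>x\<in>A. f x) = (\<Sum>x\<in>A. D (f x))"
proof -
  have "D 0 = 0" using add[of 0 0] by simp
  then show ?thesis
    using sum_comp_morphism[of D f A, OF _ add] by (simp add: comp_def)
qed

lemma new_ders_comp:
  fixes tau :: "'n::finite \<Rightarrow> 'r::comm_ring_1 \<Rightarrow> 'r"
  assumes add: "\<And>i x y. tau i (x + y) = tau i x + tau i y"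
    and leibniz: "\<And>i x y. tau i (x * y) = x * tau i y + y * tau i x"
  shows "new_ders g tau a (new_ders g tau b x)
    = (\<Sum>i\<in>UNIV. \<Sum>j\<in>UNIV. g$a$i * g$b$j * tau i (tau j x))
      + (\<Sum>j\<in>UNIV. new_ders g tau a (g$b$j) * tau j x)"
proof -
  have tau_sum: "tau i (\<Sum>j\<in>A. f j) = (\<Sum>j\<in>A. tau i (f j))" for i f and A :: "'n set"
    using add by (rule additive_sum)
  have "new_ders g tau a (new_ders g tau b x)
      = (\<Sum>i\<in>UNIV. \<Sum>j\<in>UNIV. g$a$i * (g$b$j * tau i (tau j x) + tau j x * tau i (g$b$j)))"
    by (simp add: new_ders_def tau_sum leibniz sum_distrib_left)
  also have "\<dots> = (\<Sum>i\<in>UNIV. \<Sum>j\<in>UNIV. g$a$i * g$b$j * tau i (tau j x))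
      + (\<Sum>j\<in>UNIV. \<Sum>i\<in>UNIV. g$a$i * tau i (g$b$j) * tau j x)"
    by (subst (2) sum.swap) (simp add: distrib_left sum.distrib mult_ac)
  finally show ?thesis
    by (simp add: new_ders_def sum_distrib_right)
qed

lemma new_ders_commutator:
  fixes tau :: "'n::finite \<Rightarrow> 'r::comm_ring_1 \<Rightarrow> 'r"
  assumes add: "\<And>i x y. tau i (x + y) = tau i x + tau i y"
    and leibniz: "\<And>i x y. tau i (x * y) = x * tau i y + y * tau i x"
    and comm: "pairwise_commuting tau"
  shows "new_ders g tau a (new_ders g tau b x) - new_ders g tau b (new_ders g tau a x)
    = (\<Sum>j\<in>UNIV. (new_ders g tau a (g$b$j) - new_ders g tau b (g$a$j)) * tau j x)"
proof -
  have "tau i (tau j x) = tau j (tau i x)" for i j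
    using comm by (metis pairwise_commuting_def comp_apply)
  then have "(\<Sum>i\<in>UNIV. \<Sum>j\<in>UNIV. g$a$i * g$b$j * tau i (tau j x))
      = (\<Sum>i\<in>UNIV. \<Sum>j\<in>UNIV. g$b$i * g$a$j * tau i (tau j x))"
    by (subst sum.swap) (simp add: mult_ac)
  then show ?thesis
    by (simp add: new_ders_comp[OF add leibniz] left_diff_distrib sum_subtractf)
qed

lemma der_basis_coeffs_zero:
  assumes basis: "is_der_basis phi tau"
    and zero: "\<And>x. (\<Sum>j\<in>UNIV. c j * tau j x) = 0"
  shows "c = (\<lambda>_. 0)"
proof -
  have "is_k_derivation phi (\<lambda>x. 0)"
    unfolding is_k_derivation_def by simp
  moreover have "\<forall>D. is_k_derivation phi D \<longrightarrow> (\<exists>!c. D = (\<lambda>x. \<Sum>j\<in>UNIV. c j * tau j x))"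
    using basis unfolding is_der_basis_def by (rule conjunct2)
  ultimately have "\<exists>!c. (\<lambda>x. 0) = (\<lambda>x. \<Sum>j\<in>UNIV. c j * tau j x)"
    by blast
  then obtain c0 where unique: "\<And>c'. (\<lambda>x. 0) = (\<lambda>x. \<Sum>j\<in>UNIV. c' j * tau j x) \<Longrightarrow> c' = c0"
    by (elim ex1E) blast
  have "c = c0"
    using zero by (intro unique) simp
  moreover have "(\<lambda>_. 0) = c0"
    by (intro unique) simp
  ultimately show ?thesis
    by simp
qed

lemma new_ders_symmetric:
  assumes basis: "is_der_basis phi tau"
    and comm: "pairwise_commuting tau"
    and comm': "pairwise_commuting (new_ders g tau)"
  shows "new_ders g tau a (g$b$j) = new_ders g tau b (g$a$j)"
proof -
  have add: "tau i (x + y) = tau i x + tau i y"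
    and leibniz: "tau i (x * y) = x * tau i y + y * tau i x" for i x y
    using basis unfolding is_der_basis_def is_k_derivation_def by blast+
  have "new_ders g tau a (new_ders g tau b x) = new_ders g tau b (new_ders g tau a x)" for x
    using comm' unfolding pairwise_commuting_def by (metis comp_apply)
  then have "(\<Sum>j\<in>UNIV. (new_ders g tau a (g$b$j) - new_ders g tau b (g$a$j)) * tau j x) = 0" for x
    using new_ders_commutator[OF add leibniz comm, of g a b x] by simp
  then have "(\<lambda>j. new_ders g tau a (g$b$j) - new_ders g tau b (g$a$j)) = (\<lambda>_. 0)"
    by (rule der_basis_coeffs_zero[OF basis])
  then show ?thesis
    by (metis right_minus_eq)
qed

lemma matrix_inv_left_right:
  fixes A :: "'a::semiring_1^'n^'m"
  assumes "invertible A"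
  shows "A ** matrix_inv A = mat 1" and "matrix_inv A ** A = mat 1"
  using someI_ex[OF assms[unfolded invertible_def]] unfolding matrix_inv_def by auto

lemma matrix_inv_unique:
  fixes A :: "'a::semiring_1^'n^'m" and B :: "'a^'m^'n"
  assumes AB: "A ** B = mat 1" and BA: "B ** A = mat 1"
  shows "matrix_inv A = B"
proof -
  have "invertible A"
    using AB BA unfolding invertible_def by blast
  have "matrix_inv A = matrix_inv A ** (A ** B)"
    by (simp add: AB)
  also have "\<dots> = (matrix_inv A ** A) ** B"
    by (rule matrix_mul_assoc)
  also have "\<dots> = B"
    by (simp add: matrix_inv_left_right(2)[OF \<open>invertible A\<close>])
  finally show ?thesis .
qed

lemma Amat_inverse:
  fixes g :: "'r::comm_ring_1^'n::finite^'n"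
  assumes "invertible g"
  shows "matrix_inv (Amat g) = transpose g"
  unfolding Amat_def
  by (rule matrix_inv_unique)
    (simp_all add: matrix_transpose_mul[symmetric] matrix_inv_left_right[OF assms])

lemma new_ders_left_inverse:
  fixes g G :: "'r::comm_ring_1^'n::finite^'n"
  assumes "G ** g = mat 1"
  shows "(\<Sum>a\<in>UNIV. G$p$a * new_ders g tau a x) = tau p x"
proof -
  have "(\<Sum>a\<in>UNIV. G$p$a * new_ders g tau a x) = (G *v (g *v (\<chi> j. tau j x)))$p"
    by (simp add: new_ders_def matrix_vector_mult_def)
  also have "\<dots> = tau p x"
    by (simp add: matrix_vector_mul_assoc assms)
  finally show ?thesis .
qed

lemma g3_eq_tau:
  fixes g :: "'r::comm_ring_1^'n::finite^'n"
  assumes inv: "invertible g"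
    and sym: "\<And>a b k. new_ders g tau a (g$b$k) = new_ders g tau b (g$a$k)"
  shows "g3 tau g i \<alpha> \<gamma> = tau \<gamma> (g$i$\<alpha>)"
proof -
  have "g3 tau g i \<alpha> \<gamma> = (\<Sum>\<mu>\<in>UNIV. matrix_inv g$\<gamma>$\<mu> * new_ders g tau i (g$\<mu>$\<alpha>))"
    unfolding g3_def Amat_inverse[OF inv]
    by (simp add: Amat_def transpose_def new_ders_def sum_distrib_left sum_distrib_right mult_ac)
      (rule sum.swap)
  also have "\<dots> = (\<Sum>\<mu>\<in>UNIV. matrix_inv g$\<gamma>$\<mu> * new_ders g tau \<mu> (g$i$\<alpha>))"
    by (simp add: sym[of i])
  also have "\<dots> = tau \<gamma> (g$i$\<alpha>)"
    by (rule new_ders_left_inverse[OF matrix_inv_left_right(2)[OF inv]])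
  finally show ?thesis .
qed

lemma inverse_derivative_symmetric:
  fixes g G :: "'r::comm_ring_1^'n::finite^'n"
  assumes inv: "G ** g = mat 1"
    and sym: "\<And>a b k. new_ders g tau a (g$b$k) = new_ders g tau b (g$a$k)"
  shows "(\<Sum>r\<in>UNIV. G$j$r * tau p (g$r$q)) = (\<Sum>r\<in>UNIV. G$p$r * tau j (g$r$q))"
proof -
  have "tau p (g$r$q) = (\<Sum>a\<in>UNIV. G$p$a * new_ders g tau r (g$a$q))" for r
    using new_ders_left_inverse[OF inv, of p tau "g$r$q"] by (simp add: sym[of _ r])
  then have "(\<Sum>r\<in>UNIV. G$j$r * tau p (g$r$q))
      = (\<Sum>a\<in>UNIV. G$p$a * (\<Sum>r\<in>UNIV. G$j$r * new_ders g tau r (g$a$q)))"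
    by (simp add: sum_distrib_left mult_ac) (rule sum.swap)
  also have "\<dots> = (\<Sum>a\<in>UNIV. G$p$a * tau j (g$a$q))"
    by (simp add: new_ders_left_inverse[OF inv])
  finally show ?thesis .
qed

lemma h_E_via_g3:
  "h_E tau g half i j = (\<Sum>\<nu>\<in>UNIV. tau j (g3 tau g i \<nu> \<nu>))
     + half * (\<Sum>\<mu>\<in>UNIV. \<Sum>\<beta>\<in>UNIV. \<Sum>\<gamma>\<in>UNIV.
         tau j (matrix_inv (Amat g)$\<mu>$\<beta>) * Amat g$\<beta>$\<gamma> * g3 tau g i \<gamma> \<mu>)"
proof -
  let ?B = "matrix_inv (Amat g)" and ?A = "Amat g"
  have "(\<Sum>q\<in>UNIV. \<Sum>\<mu>\<in>UNIV. \<Sum>\<beta>\<in>UNIV. \<Sum>\<gamma>\<in>UNIV. \<Sum>\<nu>\<in>UNIV.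
          g$i$q * tau j (?B$\<mu>$\<beta>) * ?A$\<beta>$\<gamma> * tau q (?B$\<gamma>$\<nu>) * ?A$\<nu>$\<mu>)
      = (\<Sum>\<mu>\<in>UNIV. \<Sum>\<beta>\<in>UNIV. \<Sum>\<gamma>\<in>UNIV. tau j (?B$\<mu>$\<beta>) * ?A$\<beta>$\<gamma> * g3 tau g i \<gamma> \<mu>)"
    by (subst sum.swap, rule sum.cong[OF refl], subst sum.swap, rule sum.cong[OF refl],
        subst sum.swap, rule sum.cong[OF refl])
      (simp add: g3_def sum_distrib_left mult_ac)
  then show ?thesis
    by (simp add: h_E_def)
qed

lemma h_Omega_eq:
  fixes g :: "'r::comm_ring_1^'n::finite^'n"
  assumes inv: "invertible g"
    and sym: "\<And>a b k. new_ders g tau a (g$b$k) = new_ders g tau b (g$a$k)"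
  shows "h_Omega tau g half i j = (\<Sum>p\<in>UNIV. tau p (tau j (g$i$p)))
    + half * (\<Sum>q\<in>UNIV. \<Sum>p\<in>UNIV. tau q (g$i$p) * (\<Sum>r\<in>UNIV. matrix_inv g$p$r * tau j (g$r$q)))"
proof -
  let ?G = "matrix_inv g"
  have "(\<Sum>q\<in>UNIV. \<Sum>p\<in>UNIV. \<Sum>r\<in>UNIV. tau q (g$i$p) * tau p (g$r$q) * ?G$j$r)
      = (\<Sum>q\<in>UNIV. \<Sum>p\<in>UNIV. tau q (g$i$p) * (\<Sum>r\<in>UNIV. ?G$j$r * tau p (g$r$q)))"
    by (simp add: sum_distrib_left mult_ac)
  also have "\<dots> = (\<Sum>q\<in>UNIV. \<Sum>p\<in>UNIV. tau q (g$i$p) * (\<Sum>r\<in>UNIV. ?G$p$r * tau j (g$r$q)))"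
    by (simp add: inverse_derivative_symmetric[OF matrix_inv_left_right(2)[OF inv] sym, of j])
  finally show ?thesis
    by (simp add: h_Omega_def)
qed

lemma h_E_eq:
  fixes g :: "'r::comm_ring_1^'n::finite^'n"
  assumes inv: "invertible g"
    and sym: "\<And>a b k. new_ders g tau a (g$b$k) = new_ders g tau b (g$a$k)"
    and comm: "pairwise_commuting tau"
  shows "h_E tau g half i j = (\<Sum>p\<in>UNIV. tau p (tau j (g$i$p)))
    + half * (\<Sum>q\<in>UNIV. \<Sum>p\<in>UNIV. tau q (g$i$p) * (\<Sum>r\<in>UNIV. matrix_inv g$p$r * tau j (g$r$q)))"
proof -
  let ?G = "matrix_inv g"
  have tau_comm: "tau j (tau p x) = tau p (tau j x)" for p x
    using comm unfolding pairwise_commuting_def by (metis comp_apply)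
  have "(\<Sum>\<mu>\<in>UNIV. \<Sum>\<beta>\<in>UNIV. \<Sum>\<gamma>\<in>UNIV. tau j (g$\<beta>$\<mu>) * ?G$\<gamma>$\<beta> * tau \<mu> (g$i$\<gamma>))
      = (\<Sum>\<mu>\<in>UNIV. \<Sum>\<gamma>\<in>UNIV. \<Sum>\<beta>\<in>UNIV. tau j (g$\<beta>$\<mu>) * ?G$\<gamma>$\<beta> * tau \<mu> (g$i$\<gamma>))"
    by (rule sum.cong[OF refl], rule sum.swap)
  also have "\<dots> = (\<Sum>q\<in>UNIV. \<Sum>p\<in>UNIV. tau q (g$i$p) * (\<Sum>r\<in>UNIV. ?G$p$r * tau j (g$r$q)))"
    by (simp add: sum_distrib_left mult_ac)
  finally show ?thesis
    unfolding h_E_via_g3 Amat_inverse[OF inv]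
    by (simp add: g3_eq_tau[OF inv sym] Amat_def transpose_def tau_comm)
qed

theorem theorem6p4:
  fixes phi :: "'k::comm_ring_1 \<Rightarrow> 'r::comm_ring_1"
    and tau :: "'n::finite \<Rightarrow> 'r \<Rightarrow> 'r"
    and g :: "'r^'n^'n"
    and half :: 'k
  assumes half: "2 * half = 1"
    and hom: "ring_hom_map phi"
    and basis: "is_der_basis phi tau"
    and comm: "pairwise_commuting tau"
    and ginv: "invertible g"
    and comm': "pairwise_commuting (new_ders g tau)"
  shows "\<forall>i j. h_Omega tau g (phi half) i j - h_E tau g (phi half) i j = 0"
proof -
  have sym: "new_ders g tau a (g$b$k) = new_ders g tau b (g$a$k)" for a b k
    by (rule new_ders_symmetric[OF basis comm comm'])
  show ?thesis
    by (simp add: h_Omega_eq[OF ginv sym] h_E_eq[OF ginv sym comm])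
qed

end
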